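(* In the four-direction cube setting with the random model described in the context, let $k\ge0$, let $R_b=\{r\in R:X_r=0\}$, and let $C_b=\mathcal N(R_b)\setminus\mathcal N(R\setminus R_b)$ (equivalently, the set of cells none of whose four rays is a zero measurement). For integers $a$ write $\rho_a:=d-|a|$, and define \[ F(a_1,a_2)=\Big(1-\tfrac{\rho_{a_1}+\rho_{a_2}-1}{d^3}\Big)^k,\quad F(a_1,a_2,a_3)=\Big(1-\tfrac{\rho_{a_1}+\rho_{a_2}+\rho_{a_3}-2}{d^3}\Big)^k, \] \[ F(a_1,a_2,a_3,a_4)=\Big(1-\tfrac{\rho_{a_1}+\rho_{a_2}+\rho_{a_3}+\rho_{a_4}-3}{d^3}\Big)^k. \] Then \[ N_C(k):=\mathbb{E}[|C_b|]=d^3-N_C^1+N_C^2-N_C^3+N_C^4, \] where \[ N_C^1=4d\Big(d\big(1-\tfrac1{d^2}\big)^k+2\sum_{s=1}^{d-1}s\big(1-\tfrac{s}{d^3}\big)^k\Big), \] \[ N_C^2=2d\sum_{i,l\in[d]}F(l+i-1-d,\,i-l)+4\sum_{i,j,l\in[d]}F(l-i,\,l-j), \] \[ N_C^3=2\sum_{i,j,l\in[d]}\Big(F(l+i-1-d,\,l-i,\,l-j)+F(l-i,\,l-j,\,l+j-1-d)\Big), \] \[ N_C^4=\sum_{i,j,l\in[d]}F(l+i-1-d,\,l-i,\,l+j-1-d,\,l-j). \]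
   Context: Cube setting. Let $d\ge2$ be an integer and $[d]=\{1,\dots,d\}$. The cells are $C=\{(i,j,l): i,j,l\in[d]\}$ (voxels of $[0,d]^3$), $|C|=d^3$. There are four families of rays (projection directions with normals proportional to $(-1,0,1),(1,0,1),(0,-1,1),(0,1,1)$), each ray identified with the set of cells it meets: for $s\in\{1-d,\dots,d-1\}$ and $t\in[d]$, $r^1_{s,t}=\{(i,j,l)\in C: i+l-1-d=s,\ j=t\}$ and $r^2_{s,t}=\{(i,j,l)\in C: i-l=s,\ j=t\}$; for $s\in[d]$ and $t\in\{1-d,\dots,d-1\}$, $r^3_{s,t}=\{(i,j,l)\in C: i=s,\ j+l-1-d=t\}$ and $r^4_{s,t}=\{(i,j,l)\in C: i=s,\ j-l=t\}$. $R_a$ is the family of rays $r^a_{\cdot,\cdot}$, $R=R_1\cup R_2\cup R_3\cup R_4$, $|R|=4d(2d-1)$; $|r|$ is the number of cells of ray $r$ (so $|r^{1}_{s,t}|=|r^2_{s,t}|=d-|s|$ and $|r^3_{s,t}|=|r^4_{s,t}|=d-|t|$). Each cell lies on exactly one ray of each family. Random model: $k$ cells are drawn independently and uniformly from $C$ (with replacement). For $r\in R$, $X_r\in\{0,1\}$ equals $1$ (a "zero measurement") iff none of the drawn cells lies on $r$. For a set $S$ of rays, $\mathcal N(S)$ is the set of cells lying on at least one ray of $S$. *)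

theory Defs
  imports "HOL-Probability.Probability"
begin

type_synonym cell = "int \<times> int \<times> int"

definition cells :: "nat \<Rightarrow> cell set" where
  "cells d = {1..int d} \<times> {1..int d} \<times> {1..int d}"

text \<open>Rays are indexed by (a,s,t) with family a in {1,2,3,4}.\<close>
type_synonym ray = "nat \<times> int \<times> int"

definition rays :: "nat \<Rightarrow> ray set" where
  "rays d = ({1,2} \<times> {1 - int d..int d - 1} \<times> {1..int d})
          \<union> ({3,4} \<times> {1..int d} \<times> {1 - int d..int d - 1})"

definition ray_cells :: "nat \<Rightarrow> ray \<Rightarrow> cell set" where
  "ray_cells d r = (case r of (a, s, t) \<Rightarrow>
     {(i, j, l) \<in> cells d.
        (a = 1 \<and> i + l - 1 - int d = s \<and> j = t) \<or>
        (a = 2 \<and> i - l = s \<and> j = t) \<or>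
        (a = 3 \<and> i = s \<and> j + l - 1 - int d = t) \<or>
        (a = 4 \<and> i = s \<and> j - l = t)})"

definition nbhd :: "nat \<Rightarrow> ray set \<Rightarrow> cell set" where
  "nbhd d S = (\<Union>r\<in>S. ray_cells d r)"

definition sample :: "nat \<Rightarrow> nat \<Rightarrow> (nat \<Rightarrow> cell) pmf" where
  "sample d k = Pi_pmf {..<k} (0, 0, 0) (\<lambda>_. pmf_of_set (cells d))"

definition Xmeas :: "nat \<Rightarrow> nat \<Rightarrow> (nat \<Rightarrow> cell) \<Rightarrow> ray \<Rightarrow> nat" where
  "Xmeas d k w r = (if (\<forall>m<k. w m \<notin> ray_cells d r) then 1 else 0)"

definition Rb :: "nat \<Rightarrow> nat \<Rightarrow> (nat \<Rightarrow> cell) \<Rightarrow> ray set" where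
  "Rb d k w = {r \<in> rays d. Xmeas d k w r = 0}"

definition Cb :: "nat \<Rightarrow> nat \<Rightarrow> (nat \<Rightarrow> cell) \<Rightarrow> cell set" where
  "Cb d k w = nbhd d (Rb d k w) - nbhd d (rays d - Rb d k w)"

definition rho :: "nat \<Rightarrow> int \<Rightarrow> real" where
  "rho d a = real d - real_of_int \<bar>a\<bar>"

definition F2 :: "nat \<Rightarrow> nat \<Rightarrow> int \<Rightarrow> int \<Rightarrow> real" where
  "F2 d k a1 a2 = (1 - (rho d a1 + rho d a2 - 1) / real d ^ 3) ^ k"

definition F3 :: "nat \<Rightarrow> nat \<Rightarrow> int \<Rightarrow> int \<Rightarrow> int \<Rightarrow> real" where
  "F3 d k a1 a2 a3 = (1 - (rho d a1 + rho d a2 + rho d a3 - 2) / real d ^ 3) ^ k"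

definition F4 :: "nat \<Rightarrow> nat \<Rightarrow> int \<Rightarrow> int \<Rightarrow> int \<Rightarrow> int \<Rightarrow> real" where
  "F4 d k a1 a2 a3 a4 =
     (1 - (rho d a1 + rho d a2 + rho d a3 + rho d a4 - 3) / real d ^ 3) ^ k"

definition NC1 :: "nat \<Rightarrow> nat \<Rightarrow> real" where
  "NC1 d k = 4 * real d * (real d * (1 - 1 / real d ^ 2) ^ k
              + 2 * (\<Sum>s = 1..int d - 1. real_of_int s * (1 - real_of_int s / real d ^ 3) ^ k))"

definition NC2 :: "nat \<Rightarrow> nat \<Rightarrow> real" where
  "NC2 d k = 2 * real d * (\<Sum>i = 1..int d. \<Sum>l = 1..int d. F2 d k (l + i - 1 - int d) (i - l))
     + 4 * (\<Sum>i = 1..int d. \<Sum>j = 1..int d. \<Sum>l = 1..int d. F2 d k (l - i) (l - j))"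

definition NC3 :: "nat \<Rightarrow> nat \<Rightarrow> real" where
  "NC3 d k = 2 * (\<Sum>i = 1..int d. \<Sum>j = 1..int d. \<Sum>l = 1..int d.
       F3 d k (l + i - 1 - int d) (l - i) (l - j) + F3 d k (l - i) (l - j) (l + j - 1 - int d))"

definition NC4 :: "nat \<Rightarrow> nat \<Rightarrow> real" where
  "NC4 d k = (\<Sum>i = 1..int d. \<Sum>j = 1..int d. \<Sum>l = 1..int d.
       F4 d k (l + i - 1 - int d) (l - i) (l + j - 1 - int d) (l - j))"

end

theory Submission
  imports Defs
begin

(* By linearity, E|C_b| is the sum over cells c of P(c in C_b), and c lies in C_b
   iff each of the four rays through c (one per family a = 1..4) is hit by some drawn cell.
   Inclusion-exclusion over the families gives
     P(c in C_b) = sum over J subset of {1,2,3,4} of (-1)^|J| * P(the rays of J through c are missed),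
   and a set of m cells is missed by k uniform draws with probability (1 - m/d^3)^k.
   Distinct rays share at most one cell, so the rays of J through c cover 1 + sum (|r_a| - 1)
   cells, where |r_a| = d - |offset| is the ray length.  Summing over the cells yields
   E|C_b| = sum_J (-1)^|J| * miss_sum J; the fifteen nonempty miss sums, grouped by |J|, are
   N_C^1, ..., N_C^4, using the reflections of the cube in its mid-planes and, for N_C^1, the
   antidiagonals of the square [d]^2.
   Order of the file: avoidance by i.i.d. uniform draws; counting lemmas; ray geometry; the
   per-cell formula and the expectation; the evaluation of the miss sums; the theorem. *)

section \<open>Random draws avoiding a set\<close>

definition avoids :: "nat \<Rightarrow> 'a set \<Rightarrow> (nat \<Rightarrow> 'a) \<Rightarrow> real" where
  "avoids k S w = of_bool (\<forall>m<k. w m \<notin> S)"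

lemma prod_avoids:
  assumes "finite I"
  shows "(\<Prod>a\<in>I. avoids k (A a) w) = avoids k (\<Union>a\<in>I. A a) w"
  using assms by (induction I rule: finite_induct) (auto simp: avoids_def)

lemma of_bool_all_hit_inclusion_exclusion:
  assumes "finite I"
  shows "of_bool (\<forall>a\<in>I. \<exists>m<k. w m \<in> A a)
           = (\<Sum>J\<in>Pow I. (-1) ^ card J * avoids k (\<Union>a\<in>J. A a) w)"
proof -
  have "of_bool (\<forall>a\<in>I. \<exists>m<k. w m \<in> A a) = (\<Prod>a\<in>I. 1 - avoids k (A a) w :: real)"
    using assms by (induction I rule: finite_induct) (auto simp: avoids_def)
  also have "\<dots> = (\<Sum>J\<in>Pow I. (-1) ^ card J * (\<Prod>a\<in>J. avoids k (A a) w))"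
    using assms by (simp add: prod_diff_conv_sum)
  finally show ?thesis
    using assms by (simp add: prod_avoids finite_subset)
qed

lemma expectation_avoids:
  assumes "finite U" "U \<noteq> {}" "S \<subseteq> U"
  shows "measure_pmf.expectation (Pi_pmf {..<k} dflt (\<lambda>_. pmf_of_set U)) (avoids k S)
           = (1 - real (card S) / real (card U)) ^ k"
proof -
  have "avoids k S = (\<lambda>w. \<Prod>m<k. of_bool (w m \<notin> S))"
    by (auto simp: avoids_def fun_eq_iff)
  then have "measure_pmf.expectation (Pi_pmf {..<k} dflt (\<lambda>_. pmf_of_set U)) (avoids k S)
      = (\<Prod>m<k. measure_pmf.expectation (pmf_of_set U) (\<lambda>x. of_bool (x \<notin> S)))"
    using assms by (simp only:) (rule expectation_prod_Pi_pmf; simp add: integrable_measure_pmf_finite)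
  also have "measure_pmf.expectation (pmf_of_set U) (\<lambda>x. of_bool (x \<notin> S) :: real)
      = real (card (U - S)) / real (card U)"
    using assms by (simp add: integral_pmf_of_set Collect_neg_eq flip: Diff_eq)
  also have "\<dots> = 1 - real (card S) / real (card U)"
    using assms by (simp add: card_Diff_subset finite_subset card_mono field_simps)
  finally show ?thesis by simp
qed

lemma integrable_sample:
  fixes f :: "(nat \<Rightarrow> cell) \<Rightarrow> real"
  assumes "cells d \<noteq> {}"
  shows "integrable (measure_pmf (sample d k)) f"
proof -
  have "finite (set_pmf (sample d k))"
    using assms unfolding sample_def
    by (subst set_Pi_pmf) (simp_all add: cells_def finite_PiE_dflt)
  then show ?thesis
    by (rule integrable_measure_pmf_finite)
qed

definition miss_prob :: "nat \<Rightarrow> nat \<Rightarrow> real \<Rightarrow> real" where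
  "miss_prob d k x = (1 - x / real d ^ 3) ^ k"

text \<open>Finitely many finite sets that pairwise meet exactly in one common point c:
  each set beyond the first contributes all but one of its points to the union.\<close>
lemma card_UN_through_point:
  assumes "finite I" "I \<noteq> {}"
    and "\<And>a. a \<in> I \<Longrightarrow> finite (A a)" "\<And>a. a \<in> I \<Longrightarrow> c \<in> A a"
    and "\<And>a b. a \<in> I \<Longrightarrow> b \<in> I \<Longrightarrow> a \<noteq> b \<Longrightarrow> A a \<inter> A b = {c}"
  shows "card (\<Union>a\<in>I. A a) + card I = 1 + (\<Sum>a\<in>I. card (A a))"
  using assms
proof (induction I rule: finite_ne_induct)
  case (singleton a)
  then show ?case by simp
next
  case (insert x F)
  have "A x \<inter> (\<Union>a\<in>F. A a) = {c}"
    using insert.hyps insert.prems by blast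
  then have "card (\<Union>a\<in>insert x F. A a) + 1 = card (A x) + card (\<Union>a\<in>F. A a)"
    using card_Un_Int[of "A x" "\<Union>a\<in>F. A a"] insert by simp
  with insert show ?case by simp
qed

lemma card_interval_overlap:
  "card ({1..n} \<inter> {1 + s..n + s :: int}) = nat (n - \<bar>s\<bar>)"
proof -
  have "{1..n} \<inter> {1 + s..n + s} = {max 1 (1 + s)..min n (n + s)}"
    by auto
  then show ?thesis by (simp add: max_def min_def abs_if)
qed

lemma sum_reflect_int: "(\<Sum>x=a..b. f x) = (\<Sum>x=a..(b::int). f (a + b - x))"
  by (rule sum.reindex_bij_witness[of _ "\<lambda>x. a + b - x" "\<lambda>x. a + b - x"]) auto

text \<open>Summing over the square [1,n]^2 along antidiagonals: the antidiagonal with offset s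
  has n - |s| points.\<close>
lemma sum_square_antidiagonal:
  fixes h :: "int \<Rightarrow> real"
  shows "(\<Sum>i=1..n. \<Sum>l=1..n. h (i + l - 1 - n)) = (\<Sum>s=1-n..n-1. of_int (n - \<bar>s\<bar>) * h s)"
proof -
  let ?overlap = "\<lambda>s. {1..n} \<inter> {1 + s..n + s}"
  have inner: "(\<Sum>l=1..n. h (i + l - 1 - n)) = (\<Sum>s\<in>{s \<in> {1-n..n-1}. i \<in> ?overlap s}. h s)"
    if "i \<in> {1..n}" for i
    by (rule sum.reindex_bij_witness[of _ "\<lambda>s. s + 1 + n - i" "\<lambda>l. i + l - 1 - n"])
       (use that in auto)
  have "(\<Sum>i=1..n. \<Sum>l=1..n. h (i + l - 1 - n))
      = (\<Sum>i\<in>{1..n}. \<Sum>s\<in>{s \<in> {1-n..n-1}. i \<in> ?overlap s}. h s)"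
    using inner by (rule sum.cong[OF refl])
  also have "\<dots> = (\<Sum>s\<in>{1-n..n-1}. \<Sum>i\<in>{i \<in> {1..n}. i \<in> ?overlap s}. h s)"
    by (rule sum.swap_restrict) auto
  also have "\<dots> = (\<Sum>s=1-n..n-1. of_int (n - \<bar>s\<bar>) * h s)"
  proof (rule sum.cong[OF refl])
    fix s assume "s \<in> {1-n..n-1}"
    then have "real (card (?overlap s)) = of_int (n - \<bar>s\<bar>)"
      by (simp add: card_interval_overlap)
    moreover have "{i \<in> {1..n}. i \<in> ?overlap s} = ?overlap s"
      by auto
    ultimately show "(\<Sum>i\<in>{i \<in> {1..n}. i \<in> ?overlap s}. h s) = of_int (n - \<bar>s\<bar>) * h s"
      by simp
  qed
  finally show ?thesis .
qed

lemma sum_symmetric_interval: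
  fixes g :: "int \<Rightarrow> real"
  assumes "n \<ge> 1"
  shows "(\<Sum>s=1-n..n-1. g \<bar>s\<bar>) = g 0 + 2 * (\<Sum>s=1..n-1. g s)"
proof -
  have split: "{1-n..n-1} = {1-n..-1} \<union> insert 0 {1..n-1}"
    using assms by auto
  have "(\<Sum>s=1-n..n-1. g \<bar>s\<bar>) = (\<Sum>s=1-n..-1. g \<bar>s\<bar>) + (\<Sum>s\<in>insert 0 {1..n-1}. g \<bar>s\<bar>)"
    unfolding split by (rule sum.union_disjoint) auto
  also have "(\<Sum>s=1-n..-1. g \<bar>s\<bar>) = (\<Sum>s=1..n-1. g s)"
    by (rule sum.reindex_bij_witness[of _ uminus uminus]) auto
  also have "(\<Sum>s\<in>insert 0 {1..n-1}. g \<bar>s\<bar>) = g 0 + (\<Sum>s=1..n-1. g s)"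
    by simp
  finally show ?thesis
    by simp
qed

text \<open>The double sum behind N_C^1: a function of the length of the family-1 ray through
  (i, j, l), summed over i and l.\<close>
lemma sum_square_antidiagonal_rho:
  fixes g :: "real \<Rightarrow> real"
  assumes "d \<ge> 1"
  shows "(\<Sum>i=1..int d. \<Sum>l=1..int d. g (rho d (i + l - 1 - int d)))
           = real d * g (real d) + 2 * (\<Sum>s=1..int d - 1. real_of_int s * g (real_of_int s))"
proof -
  define \<phi> where "\<phi> s = (real d - real_of_int s) * g (real d - real_of_int s)" for s :: int
  have "(\<Sum>i=1..int d. \<Sum>l=1..int d. g (rho d (i + l - 1 - int d)))
      = (\<Sum>s=1-int d..int d-1. of_int (int d - \<bar>s\<bar>) * g (rho d s))"
    by (rule sum_square_antidiagonal)
  also have "\<dots> = (\<Sum>s=1-int d..int d-1. \<phi> \<bar>s\<bar>)"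
    by (simp add: \<phi>_def rho_def)
  also have "\<dots> = \<phi> 0 + 2 * (\<Sum>s=1..int d - 1. \<phi> s)"
    using assms by (intro sum_symmetric_interval) simp
  also have "(\<Sum>s=1..int d - 1. \<phi> s) = (\<Sum>s=1..int d - 1. real_of_int s * g (real_of_int s))"
    by (subst sum_reflect_int) (simp add: \<phi>_def)
  finally show ?thesis
    by (simp add: \<phi>_def)
qed

lemma sum_Pow_insert:
  assumes "finite A" "x \<notin> A"
  shows "(\<Sum>J\<in>Pow (insert x A). f J) = (\<Sum>J\<in>Pow A. f J) + (\<Sum>J\<in>Pow A. f (insert x J))"
proof -
  have "inj_on (insert x) (Pow A)"
    using assms by (auto simp: inj_on_def)
  moreover have "Pow A \<inter> insert x ` Pow A = {}"
    using assms by auto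
  ultimately show ?thesis
    using assms by (simp add: Pow_insert sum.union_disjoint sum.reindex)
qed

lemma signed_sum_Pow_four:
  fixes g :: "nat set \<Rightarrow> real"
  shows "(\<Sum>J\<in>Pow {1, 2, 3, 4}. (-1) ^ card J * g J)
   = g {} - (g {1} + g {2} + g {3} + g {4})
     + (g {1, 2} + g {1, 3} + g {1, 4} + g {2, 3} + g {2, 4} + g {3, 4})
     - (g {1, 2, 3} + g {1, 2, 4} + g {1, 3, 4} + g {2, 3, 4}) + g {1, 2, 3, 4}"
  by (simp add: sum_Pow_insert)

section \<open>Geometry of the rays\<close>

definition cell_ray :: "nat \<Rightarrow> cell \<Rightarrow> nat \<Rightarrow> ray" where
  "cell_ray d c a = (case c of (i, j, l) \<Rightarrow>
     if a = 1 then (1, i + l - 1 - int d, j) else if a = 2 then (2, i - l, j)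
     else if a = 3 then (3, i, j + l - 1 - int d) else (4, i, j - l))"

text \<open>The index s of r^1_{s,t}, r^2_{s,t} and t of r^3_{s,t}, r^4_{s,t}; it determines the
  ray length d - |offset|.\<close>
definition ray_offset :: "ray \<Rightarrow> int" where
  "ray_offset r = (case r of (a, s, t) \<Rightarrow> if a \<le> 2 then s else t)"

lemma card_cells: "card (cells d) = d ^ 3"
  by (simp add: cells_def card_cartesian_product power3_eq_cube)

lemma finite_cells: "finite (cells d)"
  by (simp add: cells_def)

lemma ray_cells_subset: "ray_cells d r \<subseteq> cells d"
  by (auto simp: ray_cells_def)

lemma on_ray_iff:
  "c \<in> ray_cells d r \<longleftrightarrow> c \<in> cells d \<and> fst r \<in> {1, 2, 3, 4} \<and> r = cell_ray d c (fst r)"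
  by (cases r; cases c) (auto simp: ray_cells_def cell_ray_def)

lemma cell_determined_by_two_rays:
  assumes "a \<in> {1, 2, 3, 4}" "b \<in> {1, 2, 3, 4}" "a \<noteq> b"
    and "cell_ray d x a = cell_ray d y a" "cell_ray d x b = cell_ray d y b"
  shows "x = y"
  using assms by (cases x; cases y) (auto simp: cell_ray_def split: if_splits)

lemma distinct_rays_meet_at_most_once:
  assumes "r \<noteq> r'" "x \<in> ray_cells d r \<inter> ray_cells d r'" "y \<in> ray_cells d r \<inter> ray_cells d r'"
  shows "x = y"
  using assms cell_determined_by_two_rays[of "fst r" "fst r'" d x y] by (metis IntE on_ray_iff)

lemma rays_through_cell:
  assumes "c \<in> cells d"
  shows "{r \<in> rays d. c \<in> ray_cells d r} = cell_ray d c ` {1, 2, 3, 4}"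
  using assms by (auto simp: cell_ray_def ray_cells_def rays_def cells_def)

lemma cell_on_cell_ray:
  assumes "c \<in> cells d" "a \<in> {1, 2, 3, 4}"
  shows "cell_ray d c a \<in> rays d" "c \<in> ray_cells d (cell_ray d c a)"
  using assms rays_through_cell[OF assms(1)] by blast+

lemma card_ray_cells:
  assumes "r \<in> rays d"
  shows "real (card (ray_cells d r)) = rho d (ray_offset r)"
proof -
  obtain a s t where r: "r = (a, s, t)" by (cases r)
  define off where "off = ray_offset r"
  define f :: "int \<Rightarrow> cell" where
    "f x = (if a = 1 then (x, t, s + 1 + int d - x) else if a = 2 then (x, t, x - s)
            else if a = 3 then (s, x, t + 1 + int d - x) else (s, x, x - t))" for x
  have "ray_cells d r = f ` ({1..int d} \<inter> {1 + off..int d + off})"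
    using assms by (auto simp: r off_def f_def ray_offset_def rays_def ray_cells_def cells_def image_iff)
  moreover have "inj f"
    by (auto simp: inj_def f_def)
  ultimately have "card (ray_cells d r) = nat (int d - \<bar>off\<bar>)"
    by (metis card_image card_interval_overlap inj_on_subset subset_UNIV)
  moreover have "\<bar>off\<bar> \<le> int d"
    using assms by (auto simp: r off_def ray_offset_def rays_def)
  ultimately show ?thesis
    by (simp add: rho_def off_def)
qed

lemma Cb_iff_all_rays_hit:
  assumes "c \<in> cells d"
  shows "c \<in> Cb d k w \<longleftrightarrow> (\<forall>a\<in>{1, 2, 3, 4}. \<exists>m<k. w m \<in> ray_cells d (cell_ray d c a))"
proof -
  have "\<exists>r\<in>rays d. c \<in> ray_cells d r"
    using cell_on_cell_ray[OF assms, of 1] by auto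
  then have "c \<in> Cb d k w \<longleftrightarrow> (\<forall>r\<in>{r \<in> rays d. c \<in> ray_cells d r}. \<exists>m<k. w m \<in> ray_cells d r)"
    unfolding Cb_def nbhd_def Rb_def Xmeas_def by (auto split: if_splits; blast)
  then show ?thesis
    by (simp add: rays_through_cell[OF assms])
qed

lemma card_cell_rays_union:
  assumes "c \<in> cells d" "J \<subseteq> {1, 2, 3, 4}"
  shows "real (card (\<Union>a\<in>J. ray_cells d (cell_ray d c a)))
           = (if J = {} then 0 else 1 + (\<Sum>a\<in>J. rho d (ray_offset (cell_ray d c a))) - real (card J))"
proof (cases "J = {}")
  case False
  have on_ray: "c \<in> ray_cells d (cell_ray d c a)" if "a \<in> J" for a
    using that assms cell_on_cell_ray by blast
  have finite_ray: "finite (ray_cells d r)" for r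
    using finite_subset[OF ray_cells_subset finite_cells] .
  have meet: "ray_cells d (cell_ray d c a) \<inter> ray_cells d (cell_ray d c b) = {c}"
    if "a \<in> J" "b \<in> J" "a \<noteq> b" for a b
  proof -
    have "cell_ray d c a \<noteq> cell_ray d c b"
      using that assms(2) by (auto simp: cell_ray_def split: prod.splits)
    moreover have "c \<in> ray_cells d (cell_ray d c a)" "c \<in> ray_cells d (cell_ray d c b)"
      using that on_ray by blast+
    ultimately show ?thesis
      by (auto dest: distinct_rays_meet_at_most_once)
  qed
  have "card (\<Union>a\<in>J. ray_cells d (cell_ray d c a)) + card J
          = 1 + (\<Sum>a\<in>J. card (ray_cells d (cell_ray d c a)))"
    using assms False meet on_ray finite_ray
    by (intro card_UN_through_point) (simp_all add: finite_subset)
  then have "real (card (\<Union>a\<in>J. ray_cells d (cell_ray d c a))) + real (card J)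
          = 1 + (\<Sum>a\<in>J. real (card (ray_cells d (cell_ray d c a))))"
    by (metis (mono_tags) of_nat_1 of_nat_add of_nat_sum)
  moreover have "real (card (ray_cells d (cell_ray d c a))) = rho d (ray_offset (cell_ray d c a))"
    if "a \<in> J" for a
    using that assms cell_on_cell_ray card_ray_cells by blast
  ultimately show ?thesis
    using False by simp
qed simp

section \<open>The expected number of cells in C_b\<close>

lemma expected_cell_indicator:
  assumes "c \<in> cells d"
  shows "measure_pmf.expectation (sample d k) (\<lambda>w. of_bool (c \<in> Cb d k w))
     = (\<Sum>J\<in>Pow {1, 2, 3, 4}. (-1) ^ card J * miss_prob d k
          (if J = {} then 0 else 1 + (\<Sum>a\<in>J. rho d (ray_offset (cell_ray d c a))) - real (card J)))"
proof -
  let ?L = "\<lambda>a. ray_cells d (cell_ray d c a)"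
  have nonempty: "cells d \<noteq> {}"
    using assms by auto
  have indicator: "(\<lambda>w. of_bool (c \<in> Cb d k w))
      = (\<lambda>w. \<Sum>J\<in>Pow {1, 2, 3, 4}. (-1) ^ card J * avoids k (\<Union>a\<in>J. ?L a) w)"
    using of_bool_all_hit_inclusion_exclusion[of "{1, 2, 3, 4}" k _ ?L]
    by (simp add: Cb_iff_all_rays_hit[OF assms])
  have union_term: "measure_pmf.expectation (sample d k) (avoids k (\<Union>a\<in>J. ?L a))
      = miss_prob d k (real (card (\<Union>a\<in>J. ?L a)))" for J
  proof -
    have "(\<Union>a\<in>J. ?L a) \<subseteq> cells d"
      using ray_cells_subset by blast
    then show ?thesis
      using expectation_avoids[OF finite_cells nonempty, of _ k "(0, 0, 0)"]
      by (simp add: sample_def miss_prob_def card_cells)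
  qed
  show ?thesis
    unfolding indicator
    by (simp add: integrable_sample[OF nonempty] union_term card_cell_rays_union[OF assms])
qed

text \<open>Sum over all cells of the probability that the rays of the families in J through the
  cell are all missed.\<close>
definition miss_sum :: "nat \<Rightarrow> nat \<Rightarrow> nat set \<Rightarrow> real" where
  "miss_sum d k J = (\<Sum>c\<in>cells d. miss_prob d k
     (if J = {} then 0 else 1 + (\<Sum>a\<in>J. rho d (ray_offset (cell_ray d c a))) - real (card J)))"

text \<open>Linearity of expectation over the cells turns the per-cell formula into the signed sum
  of miss sums.\<close>
lemma expected_card_Cb_miss_sums:
  assumes "d \<ge> 1"
  shows "measure_pmf.expectation (sample d k) (\<lambda>w. real (card (Cb d k w)))
           = (\<Sum>J\<in>Pow {1, 2, 3, 4}. (-1) ^ card J * miss_sum d k J)"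
proof -
  have nonempty: "cells d \<noteq> {}"
    using assms by (auto simp: cells_def)
  have card_as_sum: "real (card (Cb d k w)) = (\<Sum>c\<in>cells d. of_bool (c \<in> Cb d k w))" for w
  proof -
    have "Cb d k w \<subseteq> cells d"
      unfolding Cb_def nbhd_def using ray_cells_subset by blast
    then show ?thesis
      by (simp add: finite_cells Int_absorb1)
  qed
  have "measure_pmf.expectation (sample d k) (\<lambda>w. real (card (Cb d k w)))
      = (\<Sum>c\<in>cells d. measure_pmf.expectation (sample d k) (\<lambda>w. of_bool (c \<in> Cb d k w)))"
    unfolding card_as_sum by (rule Bochner_Integration.integral_sum) (rule integrable_sample[OF nonempty])
  also have "\<dots> = (\<Sum>J\<in>Pow {1, 2, 3, 4}. (-1) ^ card J * miss_sum d k J)"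
    by (simp add: expected_cell_indicator miss_sum_def sum_distrib_left sum.swap[of _ "cells d"])
  finally show ?thesis .
qed

section \<open>Evaluating the miss sums\<close>

definition cube_sum :: "nat \<Rightarrow> (int \<Rightarrow> int \<Rightarrow> int \<Rightarrow> real) \<Rightarrow> real" where
  "cube_sum d f = (\<Sum>i=1..int d. \<Sum>j=1..int d. \<Sum>l=1..int d. f i j l)"

lemma cube_sum_add: "cube_sum d (\<lambda>i j l. f i j l + g i j l) = cube_sum d f + cube_sum d g"
  by (simp add: cube_sum_def sum.distrib)

lemma cube_sum_cong:
  assumes "\<And>i j l. i \<in> {1..int d} \<Longrightarrow> j \<in> {1..int d} \<Longrightarrow> l \<in> {1..int d} \<Longrightarrow> f i j l = g i j l"
  shows "cube_sum d f = cube_sum d g"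
  unfolding cube_sum_def using assms by (intro sum.cong refl) auto

lemma cube_sum_reflect_i: "cube_sum d f = cube_sum d (\<lambda>i j l. f (1 + int d - i) j l)"
  unfolding cube_sum_def by (rule sum_reflect_int)

lemma cube_sum_reflect_j: "cube_sum d f = cube_sum d (\<lambda>i j l. f i (1 + int d - j) l)"
  unfolding cube_sum_def by (intro sum.cong refl sum_reflect_int)

lemma cube_sum_reflect_l: "cube_sum d f = cube_sum d (\<lambda>i j l. f i j (1 + int d - l))"
  unfolding cube_sum_def by (intro sum.cong refl sum_reflect_int)

lemma cube_sum_indep_j: "cube_sum d (\<lambda>i j l. f i l) = real d * (\<Sum>i=1..int d. \<Sum>l=1..int d. f i l)"
  by (simp add: cube_sum_def sum_distrib_left)

lemma cube_sum_indep_i: "cube_sum d (\<lambda>i j l. f j l) = real d * (\<Sum>i=1..int d. \<Sum>l=1..int d. f i l)"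
  by (simp add: cube_sum_def)

text \<open>A nonempty miss sum in coordinates; with explicit J the simplifier evaluates the ray
  offsets to the arguments appearing in F2, F3, F4.\<close>
lemma miss_sum_cube_sum:
  assumes "J \<noteq> {}"
  shows "miss_sum d k J = cube_sum d (\<lambda>i j l. miss_prob d k
     (1 + (\<Sum>a\<in>J. rho d (ray_offset (cell_ray d (i, j, l) a))) - real (card J)))"
  using assms by (simp add: miss_sum_def cells_def cube_sum_def sum.cartesian_product)

lemma rho_minus_commute: "rho d (a - b) = rho d (b - a)"
  by (simp add: rho_def abs_minus_commute)

lemma F2_miss_prob: "F2 d k a b = miss_prob d k (rho d a + rho d b - 1)"
  by (simp add: F2_def miss_prob_def)

lemma F3_miss_prob: "F3 d k a b c = miss_prob d k (rho d a + rho d b + rho d c - 2)"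
  by (simp add: F3_def miss_prob_def)

lemma F4_miss_prob: "F4 d k a b c e = miss_prob d k (rho d a + rho d b + rho d c + rho d e - 3)"
  by (simp add: F4_def miss_prob_def)

lemma miss_sum_empty: "miss_sum d k {} = real d ^ 3"
  by (simp add: miss_sum_def miss_prob_def card_cells)

text \<open>Single rays: all four families give d times the antidiagonal sum of the square.\<close>
lemma miss_sums_single:
  assumes "d \<ge> 1"
  shows "miss_sum d k {1} + miss_sum d k {2} + miss_sum d k {3} + miss_sum d k {4} = NC1 d k"
proof -
  define K where "K = (\<Sum>i=1..int d. \<Sum>l=1..int d. miss_prob d k (rho d (i + l - 1 - int d)))"
  have single1: "miss_sum d k {1} = cube_sum d (\<lambda>i j l. miss_prob d k (rho d (i + l - 1 - int d)))"
    by (simp add: miss_sum_cube_sum cell_ray_def ray_offset_def)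
  have single2: "miss_sum d k {2} = cube_sum d (\<lambda>i j l. miss_prob d k (rho d (i + l - 1 - int d)))"
    by (simp add: miss_sum_cube_sum cell_ray_def ray_offset_def)
       (subst cube_sum_reflect_l, simp add: algebra_simps)
  have single3: "miss_sum d k {3} = cube_sum d (\<lambda>i j l. miss_prob d k (rho d (j + l - 1 - int d)))"
    by (simp add: miss_sum_cube_sum cell_ray_def ray_offset_def)
  have single4: "miss_sum d k {4} = cube_sum d (\<lambda>i j l. miss_prob d k (rho d (j + l - 1 - int d)))"
    by (simp add: miss_sum_cube_sum cell_ray_def ray_offset_def)
       (subst cube_sum_reflect_l, simp add: algebra_simps)
  have "miss_sum d k {1} + miss_sum d k {2} + miss_sum d k {3} + miss_sum d k {4} = 4 * real d * K"
    unfolding single1 single2 single3 single4 cube_sum_indep_i cube_sum_indep_j K_def by simp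
  moreover have "K = real d * (1 - 1 / real d ^ 2) ^ k
            + 2 * (\<Sum>s = 1..int d - 1. real_of_int s * (1 - real_of_int s / real d ^ 3) ^ k)"
    using sum_square_antidiagonal_rho[OF assms, of "miss_prob d k"] assms
    by (simp add: K_def miss_prob_def power2_eq_square power3_eq_cube)
  ultimately show ?thesis
    by (simp add: NC1_def)
qed

text \<open>Pairs of rays: the pairs {1,2}, {3,4} (one coordinate plane) and the four mixed pairs,
  which the reflections carry to the pair {2,4}.\<close>
lemma miss_sums_pairs:
  "miss_sum d k {1, 2} + miss_sum d k {1, 3} + miss_sum d k {1, 4}
     + miss_sum d k {2, 3} + miss_sum d k {2, 4} + miss_sum d k {3, 4} = NC2 d k"
proof -
  define P where "P = cube_sum d (\<lambda>i j l. F2 d k (l - i) (l - j))"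
  define Q where "Q = (\<Sum>i=1..int d. \<Sum>l=1..int d. F2 d k (l + i - 1 - int d) (i - l))"
  have "miss_sum d k {1, 2} = cube_sum d (\<lambda>i j l. F2 d k (l + i - 1 - int d) (i - l))"
    by (simp add: miss_sum_cube_sum cell_ray_def ray_offset_def)
       (rule cube_sum_cong, simp add: F2_miss_prob algebra_simps)
  then have pair12: "miss_sum d k {1, 2} = real d * Q"
    by (simp add: cube_sum_indep_j Q_def)
  have "miss_sum d k {3, 4} = cube_sum d (\<lambda>i j l. F2 d k (l + j - 1 - int d) (j - l))"
    by (simp add: miss_sum_cube_sum cell_ray_def ray_offset_def)
       (rule cube_sum_cong, simp add: F2_miss_prob algebra_simps)
  then have pair34: "miss_sum d k {3, 4} = real d * Q"
    by (simp add: cube_sum_indep_i Q_def)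
  have pair13: "miss_sum d k {1, 3} = P"
    unfolding P_def
    by (simp add: miss_sum_cube_sum cell_ray_def ray_offset_def)
       (subst cube_sum_reflect_l, rule cube_sum_cong,
        simp add: F2_miss_prob algebra_simps rho_minus_commute)
  have pair14: "miss_sum d k {1, 4} = P"
    unfolding P_def
    by (simp add: miss_sum_cube_sum cell_ray_def ray_offset_def)
       (subst cube_sum_reflect_i, rule cube_sum_cong,
        simp add: F2_miss_prob algebra_simps rho_minus_commute)
  have pair23: "miss_sum d k {2, 3} = P"
    unfolding P_def
    by (simp add: miss_sum_cube_sum cell_ray_def ray_offset_def)
       (subst cube_sum_reflect_j, rule cube_sum_cong,
        simp add: F2_miss_prob algebra_simps rho_minus_commute)
  have pair24: "miss_sum d k {2, 4} = P"
    unfolding P_def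
    by (simp add: miss_sum_cube_sum cell_ray_def ray_offset_def)
       (rule cube_sum_cong, simp add: F2_miss_prob algebra_simps rho_minus_commute)
  show ?thesis
    unfolding pair12 pair13 pair14 pair23 pair24 pair34 NC2_def P_def Q_def cube_sum_def by simp
qed

text \<open>Triples of rays: reflections carry {1,2,3} to {1,2,4} and {1,3,4} to {2,3,4}.\<close>
lemma miss_sums_triples:
  "miss_sum d k {1, 2, 3} + miss_sum d k {1, 2, 4} + miss_sum d k {1, 3, 4}
     + miss_sum d k {2, 3, 4} = NC3 d k"
proof -
  define A where "A = cube_sum d (\<lambda>i j l. F3 d k (l + i - 1 - int d) (l - i) (l - j))"
  define B where "B = cube_sum d (\<lambda>i j l. F3 d k (l - i) (l - j) (l + j - 1 - int d))"
  have triple123: "miss_sum d k {1, 2, 3} = A"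
    unfolding A_def
    by (simp add: miss_sum_cube_sum cell_ray_def ray_offset_def)
       (subst cube_sum_reflect_j, rule cube_sum_cong,
        simp add: F3_miss_prob algebra_simps rho_minus_commute)
  have triple124: "miss_sum d k {1, 2, 4} = A"
    unfolding A_def
    by (simp add: miss_sum_cube_sum cell_ray_def ray_offset_def)
       (rule cube_sum_cong, simp add: F3_miss_prob algebra_simps rho_minus_commute)
  have triple134: "miss_sum d k {1, 3, 4} = B"
    unfolding B_def
    by (simp add: miss_sum_cube_sum cell_ray_def ray_offset_def)
       (subst cube_sum_reflect_i, rule cube_sum_cong,
        simp add: F3_miss_prob algebra_simps rho_minus_commute)
  have triple234: "miss_sum d k {2, 3, 4} = B"
    unfolding B_def
    by (simp add: miss_sum_cube_sum cell_ray_def ray_offset_def)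
       (rule cube_sum_cong, simp add: F3_miss_prob algebra_simps rho_minus_commute)
  have "NC3 d k = 2 * (A + B)"
    by (simp add: NC3_def A_def B_def flip: cube_sum_def cube_sum_add)
  then show ?thesis
    unfolding triple123 triple124 triple134 triple234 by simp
qed

lemma miss_sum_all: "miss_sum d k {1, 2, 3, 4} = NC4 d k"
  unfolding NC4_def
  by (simp add: miss_sum_cube_sum cell_ray_def ray_offset_def flip: cube_sum_def)
     (rule cube_sum_cong, simp add: F4_miss_prob algebra_simps rho_minus_commute)

theorem proposition4p2:
  fixes d k :: nat
  assumes "d \<ge> 2"
  shows "measure_pmf.expectation (sample d k) (\<lambda>w. real (card (Cb d k w)))
         = real d ^ 3 - NC1 d k + NC2 d k - NC3 d k + NC4 d k"
proof -
  have d: "d \<ge> 1"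
    using assms by simp
  show ?thesis
    unfolding expected_card_Cb_miss_sums[OF d] signed_sum_Pow_four miss_sum_empty
      miss_sums_single[OF d, symmetric] miss_sums_pairs[symmetric]
      miss_sums_triples[symmetric] miss_sum_all[symmetric]
    by simp
qed

end
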